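(* Let $k\in\mathbb{N}$ and $n\in\mathbb{N}\cup\{\omega\}$ with $3\le k\le n$. Then: (1) if $n$ is finite, $Q(n,k)\ge \binom{n}{\lfloor (k-1)/2\rfloor}$; (2) if $n=\omega$, $Q(\omega,k)=+\infty$, i.e. $\mathbb{Z}_2^\omega$ admits no partition into finitely many $k$-thin sets.
   Context: For $n\in\mathbb{N}\cup\{\omega\}$, $\mathbb{Z}_2^n$ is the set of binary sequences of length $n$ (indexed by $\{0,\dots,n-1\}$, resp. by $\omega=\{0,1,2,\dots\}$). The Hamming distance is $\mathrm{hd}(x,y)=|\{i: x(i)\ne y(i)\}|$, and the minimum distance of $T\subseteq\mathbb{Z}_2^n$ is $\mathrm{HD}(T)=\inf\{\mathrm{hd}(x,y): x,y\in T, x\ne y\}$ (infimum of the empty set being $+\infty$). A set $T\subseteq\mathbb{Z}_2^n$ is $k$-thin if $\mathrm{HD}(T)\ge k$. For $2\le k\le n$, $Q(n,k)$ is the smallest extended natural number $s$ such that $\mathbb{Z}_2^n$ can be partitioned into $s$ sets that are $k$-thin ($+\infty$ if there is no such finite $s$). *)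

theory Defs
  imports Main "HOL-Library.Extended_Nat"
begin

text \<open>Binary sequences of length n (n an extended natural; \<infinity> plays the role of omega):
  functions nat \<Rightarrow> bool that vanish (are False) at all indices i with i \<ge> n.\<close>
definition cube :: "enat \<Rightarrow> (nat \<Rightarrow> bool) set" where
  "cube n = {x. \<forall>i. n \<le> enat i \<longrightarrow> \<not> x i}"

definition hd :: "(nat \<Rightarrow> bool) \<Rightarrow> (nat \<Rightarrow> bool) \<Rightarrow> enat" where
  "hd x y = (if finite {i. x i \<noteq> y i} then enat (card {i. x i \<noteq> y i}) else \<infinity>)"

text \<open>Minimum distance; the infimum of the empty set is \<infinity>.\<close>
definition HD :: "(nat \<Rightarrow> bool) set \<Rightarrow> enat" where
  "HD T = Inf {hd x y | x y. x \<in> T \<and> y \<in> T \<and> x \<noteq> y}"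

definition thin :: "nat \<Rightarrow> (nat \<Rightarrow> bool) set \<Rightarrow> bool" where
  "thin k T \<longleftrightarrow> enat k \<le> HD T"

text \<open>The cube of length n can be partitioned into s k-thin sets
  (given by a colouring with colours 0..<s; empty classes only make s non-minimal).\<close>
definition partitionable :: "enat \<Rightarrow> nat \<Rightarrow> nat \<Rightarrow> bool" where
  "partitionable n k s \<longleftrightarrow>
     (\<exists>c :: (nat \<Rightarrow> bool) \<Rightarrow> nat. (\<forall>x\<in>cube n. c x < s) \<and>
        (\<forall>j<s. thin k {x \<in> cube n. c x = j}))"

definition Q :: "enat \<Rightarrow> nat \<Rightarrow> enat" where
  "Q n k = Inf {enat s | s. partitionable n k s}"

end

theory Submission
  imports Defs "HOL-Library.Infinite_Set"
begin

text \<open>Any two words of weight at most \<open>r = \<lfloor>(k-1)/2\<rfloor>\<close> are at distance at most \<open>2r < k\<close>,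
  so in a partition into \<open>k\<close>-thin sets they all lie in different classes. For finite \<open>n\<close>
  there are \<open>n choose r\<close> words of weight exactly \<open>r\<close>; for \<open>n = \<omega>\<close> the infinitely many
  words of weight one already exceed every finite number of classes.\<close>

lemma thin_hd_ge:
  assumes "thin k T" "x \<in> T" "y \<in> T" "x \<noteq> y"
  shows "enat k \<le> hd x y"
proof -
  have "HD T \<le> hd x y"
    unfolding HD_def using assms(2-4) by (intro Inf_lower) blast
  with assms(1) show ?thesis
    unfolding thin_def by (rule order_trans)
qed

lemma hd_sets_le_card_add:
  assumes "finite A" "finite B"
  shows "hd (\<lambda>i. i \<in> A) (\<lambda>i. i \<in> B) \<le> enat (card A + card B)"
proof -
  have diff: "{i. (i \<in> A) \<noteq> (i \<in> B)} = (A - B) \<union> (B - A)" by blast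
  have "card ((A - B) \<union> (B - A)) \<le> card (A - B) + card (B - A)"
    by (rule card_Un_le)
  also have "\<dots> \<le> card A + card B"
    using assms by (intro add_mono card_mono) auto
  finally show ?thesis
    unfolding hd_def diff using assms by simp
qed

lemma partitionable_close_set_card_le:
  assumes "partitionable n k s" "S \<subseteq> cube n"
    and close: "\<And>x y. x \<in> S \<Longrightarrow> y \<in> S \<Longrightarrow> x \<noteq> y \<Longrightarrow> hd x y < enat k"
  shows "finite S \<and> card S \<le> s"
proof -
  obtain c where colours: "\<forall>x\<in>cube n. c x < s"
    and classes_thin: "\<forall>j<s. thin k {x \<in> cube n. c x = j}"
    using assms(1) unfolding partitionable_def by blast
  have inj: "inj_on c S"
  proof (rule inj_onI, rule ccontr)
    fix x y assume "x \<in> S" "y \<in> S" "c x = c y" "x \<noteq> y"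
    moreover have "thin k {z \<in> cube n. c z = c x}"
      using classes_thin colours \<open>x \<in> S\<close> assms(2) by blast
    ultimately have "enat k \<le> hd x y"
      using assms(2) by (auto intro: thin_hd_ge)
    with close[OF \<open>x \<in> S\<close> \<open>y \<in> S\<close> \<open>x \<noteq> y\<close>] show False
      by (simp add: not_less[symmetric])
  qed
  have colours_S: "c ` S \<subseteq> {..<s}"
    using colours assms(2) by blast
  then have "finite S"
    using inj finite_imageD finite_lessThan finite_subset by metis
  moreover have "card S \<le> s"
  proof -
    have "card S = card (c ` S)"
      using inj by (simp add: card_image)
    also have "\<dots> \<le> card {..<s}"
      using colours_S by (intro card_mono) simp_all
    finally show ?thesis by simp
  qed
  ultimately show ?thesis ..
qed

lemma Q_ge_card_close_set:
  assumes "S \<subseteq> cube n"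
    and "\<And>x y. x \<in> S \<Longrightarrow> y \<in> S \<Longrightarrow> x \<noteq> y \<Longrightarrow> hd x y < enat k"
  shows "enat (card S) \<le> Q n k"
  unfolding Q_def using partitionable_close_set_card_le[OF _ assms]
  by (auto intro!: Inf_greatest)

lemma Q_infinite_if_infinite_close_set:
  assumes "infinite S" "S \<subseteq> cube n"
    and "\<And>x y. x \<in> S \<Longrightarrow> y \<in> S \<Longrightarrow> x \<noteq> y \<Longrightarrow> hd x y < enat k"
  shows "Q n k = \<infinity>"
proof -
  have "{enat s | s. partitionable n k s} = {}"
    using partitionable_close_set_card_le[OF _ assms(2,3)] assms(1) by blast
  then show ?thesis
    unfolding Q_def by (simp add: top_enat_def)
qed

lemma Q_ge_choose:
  assumes "r + r < k"
  shows "enat (m choose r) \<le> Q (enat m) k"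
proof -
  define Subsets where "Subsets = {A. A \<subseteq> {..<m} \<and> card A = r}"
  let ?S = "(\<lambda>A i. i \<in> A) ` Subsets"
  have "inj_on (\<lambda>A i. i \<in> A) Subsets"
    by (rule inj_onI) (simp add: fun_eq_iff set_eq_iff)
  then have "card ?S = m choose r"
    unfolding Subsets_def by (simp add: card_image n_subsets)
  moreover have "enat (card ?S) \<le> Q (enat m) k"
  proof (rule Q_ge_card_close_set)
    show "?S \<subseteq> cube (enat m)"
      unfolding cube_def Subsets_def by auto
    show "hd x y < enat k" if xy: "x \<in> ?S" "y \<in> ?S" for x y
    proof -
      obtain A B where "A \<in> Subsets" "B \<in> Subsets" "x = (\<lambda>i. i \<in> A)" "y = (\<lambda>i. i \<in> B)"
        using xy by blast
      moreover from this have "finite A" "finite B"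
        unfolding Subsets_def by (auto intro: finite_subset)
      ultimately have "hd x y \<le> enat (r + r)"
        using hd_sets_le_card_add[of A B] unfolding Subsets_def by auto
      also have "\<dots> < enat k" using assms by simp
      finally show ?thesis .
    qed
  qed
  ultimately show ?thesis by simp
qed

lemma Q_infinity:
  assumes "2 < k"
  shows "Q \<infinity> k = \<infinity>"
proof -
  let ?S = "range (\<lambda>j::nat. \<lambda>i. i \<in> {j})"
  show ?thesis
  proof (rule Q_infinite_if_infinite_close_set)
    have "inj (\<lambda>j::nat. \<lambda>i. i \<in> {j})" by (auto simp: inj_def fun_eq_iff)
    then show "infinite ?S" by (rule range_inj_infinite)
    show "?S \<subseteq> cube \<infinity>"
      unfolding cube_def by auto
    show "hd x y < enat k" if xy: "x \<in> ?S" "y \<in> ?S" for x y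
    proof -
      obtain a b where "x = (\<lambda>i. i \<in> {a})" "y = (\<lambda>i. i \<in> {b})"
        using xy by blast
      then have "hd x y \<le> enat (card {a} + card {b})"
        using hd_sets_le_card_add[of "{a}" "{b}"] by simp
      also have "\<dots> < enat k" using assms by simp
      finally show ?thesis .
    qed
  qed
qed

theorem proposition17:
  fixes k :: nat and n :: enat
  assumes "3 \<le> k" and "enat k \<le> n"
  shows "(\<forall>m::nat. n = enat m \<longrightarrow> enat (m choose ((k - 1) div 2)) \<le> Q n k)
       \<and> (n = \<infinity> \<longrightarrow> Q n k = \<infinity>)"
proof -
  have "(k - 1) div 2 + (k - 1) div 2 < k"
    using assms(1) by linarith
  then show ?thesis
    using Q_ge_choose Q_infinity assms(1) by auto
qed

end
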